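(* Assume $X_0\in L^\infty$. Then $\inf\{\int_0^1Q(s)Q_\rho(1-s)ds : Q\in\mathscr{Q},\ Q\succeq_{\mathrm{icx}}Q_0\}=-\infty$.
   Context: $(\Omega,\mathcal{F},\mathbb{P})$ is a complete nonatomic probability space. $\rho\in L^2$ with $\mathbb{P}(\rho>0)=1$ and $\mathrm{Var}[\rho]>0$. For a random variable $X$, $Q_X(t)=\inf\{y\in\mathbb{R}:\mathbb{P}(X\le y)>t\}$, $t\in[0,1)$, and $Q_0:=Q_{X_0}$. $\mathscr{Q}$ is the set of increasing, right-continuous $Q:[0,1)\to\mathbb{R}$ with $\int_0^1Q^2(s)ds<\infty$. For $Q_1,Q_2\in\mathscr{Q}$, $Q_1\succeq_{\mathrm{icx}}Q_2$ means $\int_t^1Q_1(s)ds\ge\int_t^1Q_2(s)ds$ for all $t\in[0,1]$. *)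

theory Defs
  imports "HOL-Probability.Probability"
begin

definition nonatomic :: "'a measure \<Rightarrow> bool" where
  "nonatomic M \<longleftrightarrow> (\<forall>A\<in>sets M. measure M A > 0 \<longrightarrow>
      (\<exists>B\<in>sets M. B \<subseteq> A \<and> 0 < measure M B \<and> measure M B < measure M A))"

definition quantile :: "'a measure \<Rightarrow> ('a \<Rightarrow> real) \<Rightarrow> real \<Rightarrow> real" where
  "quantile M X t = Inf {y::real. measure M {x \<in> space M. X x \<le> y} > t}"

text \<open>The class of increasing, right-continuous, square-integrable functions on [0,1).
  Only the values on [0,1) matter.\<close>
definition QClass :: "(real \<Rightarrow> real) set" where
  "QClass = {Q. mono_on {0..<1} Q \<and> (\<forall>t\<in>{0..<1}. continuous (at_right t) Q) \<and>
       set_integrable lborel {0..<1} (\<lambda>s. (Q s)\<^sup>2)}"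

definition icx_ge :: "(real \<Rightarrow> real) \<Rightarrow> (real \<Rightarrow> real) \<Rightarrow> bool" where
  "icx_ge Q1 Q2 \<longleftrightarrow> (\<forall>t\<in>{0..1}.
      (LINT s:{t..<1}|lborel. Q1 s) \<ge> (LINT s:{t..<1}|lborel. Q2 s))"

end

theory Submission
  imports Defs
begin

(* Since Var \<rho> > 0, the quantile function q of \<rho> is not constant on (0,1), so
   g(s) = q(1 - s) is antitone with a strict drop, and its average over a top tail [c,1) is
   strictly below its mean over (0,1); Markov's inequality q(t) \<le> sqrt (E \<rho>^2 / (1 - t)) + 1
   makes g integrable.  With B a bound for |X0|, the step functions
   Q_l = B - l + l / (1 - c) * 1_[c,1) (l \<ge> 0) are admissible: their tail integrals dominate
   those of the constant B, which dominate those of Q_0.  The objective at Q_l is affine in l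
   with slope (tail average of g) - (mean of g) < 0, so it is unbounded below. *)

lemma set_integrable_bounded:
  fixes f :: "'a \<Rightarrow> real"
  assumes "A \<in> sets M" "emeasure M A < \<infinity>" "f \<in> borel_measurable M"
    and "\<And>x. x \<in> A \<Longrightarrow> \<bar>f x\<bar> \<le> B"
  shows "set_integrable M A f"
  unfolding set_integrable_def using assms by (intro integrableI_bounded_set_indicator) auto

lemma set_borel_measurable_antimono_on:
  fixes g :: "real \<Rightarrow> real"
  assumes "antimono_on A g" "A \<in> sets borel"
  shows "set_borel_measurable lborel A g"
proof -
  have "mono_on A (\<lambda>s. - g s)" using assms(1) by (auto simp: monotone_on_def)
  then have "(\<lambda>s. - (- g s)) \<in> borel_measurable (restrict_space borel A)"
    by (intro borel_measurable_uminus borel_measurable_mono_on_fnc)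
  with assms(2) show ?thesis
    unfolding set_borel_measurable_def by (simp add: borel_measurable_restrict_space_iff)
qed

lemma set_integrable_powr:
  assumes "-1 < a"
  shows "set_integrable lborel {0<..<1} (\<lambda>s::real. s powr a)"
proof -
  have "(\<lambda>s::real. s powr a) absolutely_integrable_on {0<..1}"
    using integrable_on_powr_from_0'[OF assms, of 1]
    by (subst absolutely_integrable_on_iff_nonneg) auto
  then have "set_integrable lborel {0<..1} (\<lambda>s::real. s powr a)"
    unfolding set_integrable_def by (subst (asm) integrable_completion) auto
  then show ?thesis by (rule set_integrable_subset) auto
qed

lemma set_integral_affine_indicator_mult:
  fixes g :: "'a \<Rightarrow> real"
  assumes g: "set_integrable M A g" and C: "C \<in> sets M"
  shows "(LINT s:A|M. (a + b * indicator C s) * g s)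
    = a * (LINT s:A|M. g s) + b * (LINT s:(A \<inter> C)|M. g s)"
proof -
  have restrict: "(\<lambda>s. indicator A s *\<^sub>R (indicator C s * g s))
      = (\<lambda>s. indicator (A \<inter> C) s *\<^sub>R g s)"
    by (auto simp: fun_eq_iff indicator_def)
  have "set_integrable M A (\<lambda>s. indicator C s * g s)"
    using integrable_real_mult_indicator[OF C g[unfolded set_integrable_def]]
    unfolding set_integrable_def by (simp add: mult_ac)
  then have "(LINT s:A|M. (a + b * indicator C s) * g s)
      = a * (LINT s:A|M. g s) + b * (LINT s:A|M. indicator C s * g s)"
    using g by (simp add: distrib_right mult.assoc set_integral_add)
  also have "(LINT s:A|M. indicator C s * g s) = (LINT s:(A \<inter> C)|M. g s)"
    unfolding set_lebesgue_integral_def restrict ..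
  finally show ?thesis .
qed

lemma tail_average_less_mean_if_antimono:
  fixes g :: "real \<Rightarrow> real"
  assumes g: "set_integrable lborel {0<..<1} g" and anti: "antimono_on {0<..<1} g"
    and ac: "0 < a" "a < c" "c < 1" and jump: "g c < g a"
  shows "(LINT s:{c..<1}|lborel. g s) / (1 - c) < (LINT s:{0<..<1}|lborel. g s)"
proof -
  have g_le: "g t \<le> g s" if "s \<le> t" "s \<in> {0<..<1}" "t \<in> {0<..<1}" for s t
    using monotone_onD[OF anti that(2,3,1)] .
  have g_on: "set_integrable lborel S g" if "S \<subseteq> {0<..<1}" "S \<in> sets borel" for S
    using set_integrable_subset[OF g] that by simp
  have const_on: "set_integrable lborel S (\<lambda>_. y)"
    if "S \<subseteq> {0<..<1}" "S \<in> sets borel" for S :: "real set" and y :: real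
  proof (rule set_integrable_bounded[where B = "\<bar>y\<bar>"])
    have "emeasure lborel S \<le> emeasure lborel {0<..<1::real}"
      by (rule emeasure_mono) (use that in auto)
    then show "emeasure lborel S < \<infinity>" by (simp add: le_less_trans)
  qed (use that in auto)
  define I1 where "I1 = (LINT s:{0<..<a}|lborel. g s)"
  define I2 where "I2 = (LINT s:{a..<c}|lborel. g s)"
  define T where "T = (LINT s:{c..<1}|lborel. g s)"
  have "{0<..<1} = ({0<..<a} \<union> {a..<c}) \<union> {c..<1}" using ac by auto
  also have "(LINT s:({0<..<a} \<union> {a..<c}) \<union> {c..<1}|lborel. g s)
      = (LINT s:{0<..<a} \<union> {a..<c}|lborel. g s) + T"
    unfolding T_def using ac by (intro set_integral_Un g_on) auto
  also have "(LINT s:{0<..<a} \<union> {a..<c}|lborel. g s) = I1 + I2"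
    unfolding I1_def I2_def using ac by (intro set_integral_Un g_on) auto
  finally have split: "(LINT s:{0<..<1}|lborel. g s) = I1 + I2 + T" .
  have "a * g a \<le> I1"
  proof -
    have "(LINT s:{0<..<a}|lborel. g a) \<le> I1"
      unfolding I1_def using ac by (intro set_integral_mono const_on g_on g_le) auto
    then show ?thesis using ac by (simp add: set_integral_const)
  qed
  moreover have "(c - a) * g c \<le> I2"
  proof -
    have "(LINT s:{a..<c}|lborel. g c) \<le> I2"
      unfolding I2_def using ac by (intro set_integral_mono const_on g_on g_le) auto
    then show ?thesis using ac by (simp add: set_integral_const)
  qed
  moreover have "T / (1 - c) \<le> T + c * g c"
  proof -
    have "T \<le> (LINT s:{c..<1}|lborel. g c)"
      unfolding T_def using ac by (intro set_integral_mono const_on g_on g_le) auto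
    then have "T \<le> (1 - c) * g c" using ac by (simp add: set_integral_const)
    then have "c * (T / (1 - c)) \<le> c * g c"
      using ac by (intro mult_left_mono) (auto simp: divide_le_eq mult.commute)
    moreover have "T / (1 - c) = T + c * (T / (1 - c))" using ac by (simp add: field_simps)
    ultimately show ?thesis by linarith
  qed
  moreover have "a * g c < a * g a" using ac jump by simp
  ultimately show ?thesis unfolding split T_def[symmetric] by (simp add: algebra_simps)
qed

lemma INF_ereal_eq_minf_if_affine_ray:
  assumes ray: "\<And>l. 0 \<le> l \<Longrightarrow> Q l \<in> A"
    and f: "\<And>l. 0 \<le> l \<Longrightarrow> f (Q l) = a + l * d" and d: "d < 0"
  shows "(INF x\<in>A. ereal (f x)) = -\<infinity>"
  unfolding bot_ereal_def[symmetric] INF_eq_bot_iff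
proof (intro allI impI)
  fix y :: ereal assume "bot < y"
  then obtain r where r: "ereal r < y"
    using ereal_dense2[of "-\<infinity>" y] by (auto simp: bot_ereal_def)
  define l where "l = \<bar>a - r\<bar> / - d + 1"
  have l: "0 \<le> l" using d unfolding l_def by simp
  have "l * d = - \<bar>a - r\<bar> + d" using d unfolding l_def by (simp add: field_simps)
  then have "f (Q l) < r" using f[OF l] d by linarith
  then have "ereal (f (Q l)) < y" by (intro order.strict_trans[OF _ r]) simp
  with ray[OF l] show "\<exists>x\<in>A. ereal (f x) < y" by blast
qed

context prob_space
begin

lemma quantile_level_set_nonempty_bdd_below:
  fixes X :: "'a \<Rightarrow> real"
  assumes X: "random_variable borel X" and t: "t \<in> {0<..<1}"
  shows "{y. t < prob {x \<in> space M. X x \<le> y}} \<noteq> {}"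
    and "bdd_below {y. t < prob {x \<in> space M. X x \<le> y}}"
proof -
  interpret D: real_distribution "distr M borel X" using X by simp
  have cdf_eq: "cdf (distr M borel X) = (\<lambda>y. prob {x \<in> space M. X x \<le> y})"
    using X by (auto simp: fun_eq_iff cdf_def measure_distr vimage_def Int_def conj_commute)
  have "\<forall>\<^sub>F y in at_top. t < prob {x \<in> space M. X x \<le> y}"
    using order_tendstoD(1)[OF D.cdf_lim_at_top_prob] t by (simp add: cdf_eq)
  then show "{y. t < prob {x \<in> space M. X x \<le> y}} \<noteq> {}"
    by (auto simp: eventually_at_top_linorder)
  have "\<forall>\<^sub>F y in at_bot. prob {x \<in> space M. X x \<le> y} < t"
    using order_tendstoD(2)[OF D.cdf_lim_at_bot] t by (simp add: cdf_eq)
  then obtain N where N: "\<And>y. y \<le> N \<Longrightarrow> prob {x \<in> space M. X x \<le> y} < t"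
    by (auto simp: eventually_at_bot_linorder)
  show "bdd_below {y. t < prob {x \<in> space M. X x \<le> y}}"
    by (rule bdd_belowI[of _ N]) (metis N mem_Collect_eq nle_le order.asym)
qed

lemma quantile_le:
  assumes "random_variable borel X" "t \<in> {0<..<1}" "t < prob {x \<in> space M. X x \<le> y}"
  shows "quantile M X t \<le> y"
  unfolding quantile_def
  using assms by (intro cInf_lower) (auto intro: quantile_level_set_nonempty_bdd_below)

lemma less_prob_le_if_quantile_less:
  assumes X: "random_variable borel X" and t: "t \<in> {0<..<1}" and q: "quantile M X t < y"
  shows "t < prob {x \<in> space M. X x \<le> y}"
proof -
  obtain y' where y': "t < prob {x \<in> space M. X x \<le> y'}" "y' < y"
    using cInf_lessD[OF quantile_level_set_nonempty_bdd_below(1)[OF X t]] q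
    unfolding quantile_def by auto
  have "prob {x \<in> space M. X x \<le> y'} \<le> prob {x \<in> space M. X x \<le> y}"
    using X y'(2) by (intro finite_measure_mono) auto
  with y'(1) show ?thesis by linarith
qed

lemma quantile_mono: "random_variable borel X \<Longrightarrow> mono_on {0<..<1} (quantile M X)"
  unfolding quantile_def
  by (intro mono_onI cInf_superset_mono quantile_level_set_nonempty_bdd_below) auto

lemma le_if_AE_le_and_less_prob_le:
  fixes X :: "'a \<Rightarrow> real"
  assumes X: "random_variable borel X" and a: "AE x in M. a \<le> X x"
    and t: "0 \<le> t" and y: "t < prob {x \<in> space M. X x \<le> y}"
  shows "a \<le> y"
proof (rule ccontr)
  assume "\<not> a \<le> y"
  with a have "AE x in M. x \<notin> {x \<in> space M. X x \<le> y}" by (auto elim!: eventually_mono)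
  then have "prob {x \<in> space M. X x \<le> y} = 0" using X by (subst prob_eq_0) auto
  with t y show False by simp
qed

lemma le_quantile_if_AE_le:
  assumes "random_variable borel X" "AE x in M. a \<le> X x" "t \<in> {0<..<1}"
  shows "a \<le> quantile M X t"
  unfolding quantile_def using assms
  by (intro cInf_greatest quantile_level_set_nonempty_bdd_below)
     (auto intro: le_if_AE_le_and_less_prob_le)

text \<open>At \<open>t = 0\<close> the level set need not be bounded below; the bound on \<open>X\<close> provides it.\<close>
lemma quantile_le_if_AE_abs_le:
  assumes X: "random_variable borel X" and B: "AE x in M. \<bar>X x\<bar> \<le> B" and t: "t \<in> {0..<1}"
  shows "quantile M X t \<le> B"
  unfolding quantile_def
proof (rule cInf_lower)
  have "prob {x \<in> space M. X x \<le> B} = 1"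
    using X B by (subst prob_eq_1) (auto elim: AE_mp)
  with t show "B \<in> {y. t < prob {x \<in> space M. X x \<le> y}}" by simp
  have "AE x in M. - B \<le> X x" using B by (auto elim!: AE_mp)
  with X t show "bdd_below {y. t < prob {x \<in> space M. X x \<le> y}}"
    by (intro bdd_belowI[of _ "- B"]) (auto intro: le_if_AE_le_and_less_prob_le)
qed

lemma quantile_le_second_moment:
  fixes X :: "'a \<Rightarrow> real"
  assumes X: "random_variable borel X" and I: "integrable M (\<lambda>x. (X x)\<^sup>2)" and t: "t \<in> {0<..<1}"
  shows "quantile M X t \<le> sqrt (expectation (\<lambda>x. (X x)\<^sup>2) / (1 - t)) + 1"
proof (rule quantile_le[OF X t])
  define K where "K = expectation (\<lambda>x. (X x)\<^sup>2)"
  define y where "y = sqrt (K / (1 - t)) + 1"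
  have "0 \<le> K" unfolding K_def by (intro integral_nonneg_AE) auto
  then have y: "0 < y" "K / (1 - t) < y\<^sup>2"
    using t unfolding y_def by (auto intro!: add_pos_nonneg
        simp: real_less_lsqrt power2_eq_square algebra_simps)
  have "prob {x \<in> space M. y < X x} \<le> prob {x \<in> space M. y\<^sup>2 \<le> (X x)\<^sup>2}"
    using X y(1) by (intro finite_measure_mono) (auto intro!: power_mono)
  also have "\<dots> \<le> K / y\<^sup>2"
    unfolding K_def by (rule integral_Markov_inequality_measure[OF I]) (use X y in auto)
  also have "\<dots> < 1 - t"
    using y t by (simp add: field_simps)
  finally have "prob {x \<in> space M. y < X x} < 1 - t" .
  moreover have "{x \<in> space M. X x \<le> y} = space M - {x \<in> space M. y < X x}" by auto
  ultimately show "t < prob {x \<in> space M. X x \<le> sqrt (K / (1 - t)) + 1}"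
    using X by (simp add: prob_compl y_def[symmetric])
qed

lemma AE_eq_const_if_prob_le_jumps:
  fixes X :: "'a \<Rightarrow> real"
  assumes X: "random_variable borel X"
    and below: "\<And>y. y < c \<Longrightarrow> prob {x \<in> space M. X x \<le> y} = 0"
    and above: "\<And>y. c < y \<Longrightarrow> prob {x \<in> space M. X x \<le> y} = 1"
  shows "AE x in M. X x = c"
proof -
  have "AE x in M. \<forall>r\<in>\<rat>. (r < c \<longrightarrow> r < X x) \<and> (c < r \<longrightarrow> X x \<le> r)"
  proof (rule AE_ball_countable[THEN iffD2])
    show "countable \<rat>" by (simp add: countable_rat)
    show "\<forall>r\<in>\<rat>. AE x in M. (r < c \<longrightarrow> r < X x) \<and> (c < r \<longrightarrow> X x \<le> r)"
    proof
      fix r :: real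
      have "AE x in M. r < c \<longrightarrow> x \<notin> {x \<in> space M. X x \<le> r}"
        using below[of r] X by (cases "r < c") (auto simp: prob_eq_0)
      moreover have "AE x in M. c < r \<longrightarrow> x \<in> {x \<in> space M. X x \<le> r}"
        using above[of r] X by (cases "c < r") (auto simp: prob_eq_1)
      ultimately show "AE x in M. (r < c \<longrightarrow> r < X x) \<and> (c < r \<longrightarrow> X x \<le> r)"
        using AE_space by eventually_elim auto
    qed
  qed
  then show ?thesis
  proof eventually_elim
    fix x assume r: "\<forall>r\<in>\<rat>. (r < c \<longrightarrow> r < X x) \<and> (c < r \<longrightarrow> X x \<le> r)"
    show "X x = c"
    proof (cases "X x" c rule: linorder_cases)
      case less
      with Rats_dense_in_real obtain r where "r \<in> \<rat>" "X x < r" "r < c" by blast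
      with r show ?thesis by auto
    next
      case greater
      with Rats_dense_in_real obtain r where "r \<in> \<rat>" "c < r" "r < X x" by blast
      with r show ?thesis by auto
    qed
  qed
qed

lemma AE_eq_const_if_quantile_const:
  fixes X :: "'a \<Rightarrow> real"
  assumes X: "random_variable borel X" and c: "\<And>t. t \<in> {0<..<1} \<Longrightarrow> quantile M X t = c"
  shows "AE x in M. X x = c"
proof (rule AE_eq_const_if_prob_le_jumps[OF X])
  fix y assume "y < c"
  define p where "p = prob {x \<in> space M. X x \<le> y}"
  have le: "p \<le> t" if "t \<in> {0<..<1}" for t
    using quantile_le[OF X that, of y] c[OF that] \<open>y < c\<close> unfolding p_def by linarith
  show "p = 0"
  proof (rule ccontr)
    assume "p \<noteq> 0"
    then have "0 < p" unfolding p_def by (simp add: less_le)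
    then have "min (1/2) (p/2) \<in> {0<..<1}" by auto
    with le \<open>0 < p\<close> show False by fastforce
  qed
next
  fix y assume "c < y"
  define p where "p = prob {x \<in> space M. X x \<le> y}"
  have gt: "t < p" if "t \<in> {0<..<1}" for t
    using less_prob_le_if_quantile_less[OF X that] c[OF that] \<open>c < y\<close> unfolding p_def by simp
  show "p = 1"
  proof (rule ccontr)
    assume "p \<noteq> 1"
    then have "p < 1" unfolding p_def by (simp add: less_le)
    moreover have "0 \<le> p" unfolding p_def by simp
    ultimately have "(1 + p) / 2 \<in> {0<..<1}" by auto
    with gt \<open>p < 1\<close> show False by fastforce
  qed
qed

lemma variance_eq_0_if_AE_eq_const:
  fixes X :: "'a \<Rightarrow> real"
  assumes X: "random_variable borel X" and c: "AE x in M. X x = c"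
  shows "variance X = 0"
proof -
  have "expectation X = expectation (\<lambda>_. c)" using X c by (intro integral_cong_AE) auto
  then have "expectation X = c" by (simp add: prob_space)
  then have "variance X = expectation (\<lambda>_. 0 :: real)"
    using X c by (intro integral_cong_AE) auto
  then show ?thesis by simp
qed

lemma quantile_nonconstant_if_variance_pos:
  fixes X :: "'a \<Rightarrow> real"
  assumes X: "random_variable borel X" and var: "0 < variance X"
  obtains t1 t2 where "0 < t1" "t1 < t2" "t2 < 1" "quantile M X t1 < quantile M X t2"
proof -
  have "\<exists>t1 t2. 0 < t1 \<and> t1 < t2 \<and> t2 < 1 \<and> quantile M X t1 < quantile M X t2"
  proof (rule ccontr)
    assume no_increase: "\<not> ?thesis"
    have const: "quantile M X t2 \<le> quantile M X t1" if "0 < t1" "t1 < t2" "t2 < 1" for t1 t2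
      using no_increase that by (meson not_less)
    have "quantile M X t = quantile M X (1/2)" if "t \<in> {0<..<1}" for t
      using that const[of t "1/2"] const[of "1/2" t] mono_onD[OF quantile_mono[OF X], of t "1/2"]
        mono_onD[OF quantile_mono[OF X], of "1/2" t]
      by (cases t "1/2 :: real" rule: linorder_cases) force+
    then have "variance X = 0"
      by (intro variance_eq_0_if_AE_eq_const X AE_eq_const_if_quantile_const)
    with var show False by simp
  qed
  with that show ?thesis by blast
qed

lemma antimono_on_reflected_quantile:
  "random_variable borel X \<Longrightarrow> antimono_on {0<..<1} (\<lambda>s. quantile M X (1 - s))"
  using quantile_mono by (auto simp: monotone_on_def)

lemma set_integrable_reflected_quantile:
  fixes X :: "'a \<Rightarrow> real"
  assumes X: "random_variable borel X" and I: "integrable M (\<lambda>x. (X x)\<^sup>2)"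
    and nonneg: "AE x in M. 0 \<le> X x"
  shows "set_integrable lborel {0<..<1} (\<lambda>s. quantile M X (1 - s))"
proof (rule set_integrable_bound)
  define K where "K = expectation (\<lambda>x. (X x)\<^sup>2)"
  show "set_integrable lborel {0<..<1} (\<lambda>s::real. sqrt K * s powr (-1/2) + 1)"
    by (intro set_integral_add set_integrable_mult_right set_integrable_powr set_integrable_bounded)
       auto
  show "set_borel_measurable lborel {0<..<1} (\<lambda>s. quantile M X (1 - s))"
    by (intro set_borel_measurable_antimono_on antimono_on_reflected_quantile X) simp
  have "\<bar>quantile M X (1 - s)\<bar> \<le> sqrt K * s powr (-1/2) + 1" if s: "s \<in> {0<..<1}" for s
  proof -
    have "0 \<le> quantile M X (1 - s)"
      using s by (intro le_quantile_if_AE_le[OF X nonneg]) auto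
    moreover have "quantile M X (1 - s) \<le> sqrt (K / s) + 1"
      using quantile_le_second_moment[OF X I, of "1 - s"] s unfolding K_def by simp
    moreover have "sqrt (K / s) = sqrt K * s powr (-1/2)"
      using s by (simp add: powr_minus_divide powr_half_sqrt real_sqrt_divide)
    ultimately show ?thesis by simp
  qed
  then show "AE s in lborel. s \<in> {0<..<1} \<longrightarrow>
      norm (quantile M X (1 - s)) \<le> norm (sqrt K * s powr (-1/2) + 1)"
    by (intro AE_I2 impI) (simp only: real_norm_def, rule order_trans[OF _ abs_ge_self], blast)
qed

end

definition mean_preserving_step :: "real \<Rightarrow> real \<Rightarrow> real \<Rightarrow> real \<Rightarrow> real" where
  "mean_preserving_step B c l s = B - l + l / (1 - c) * indicator {c..} s"

lemma set_integral_mean_preserving_step: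
  assumes "t \<le> 1" "c \<le> 1"
  shows "(LINT s:{t..<1}|lborel. mean_preserving_step B c l s)
    = (B - l) * (1 - t) + l / (1 - c) * (1 - max t c)"
proof -
  have "{t..<1} \<inter> {c..} = {max t c..<1}" by auto
  moreover have "set_integrable lborel {t..<1} (\<lambda>_. 1 :: real)"
    using assms by (intro set_integrable_bounded) auto
  ultimately show ?thesis
    using set_integral_affine_indicator_mult[where g = "\<lambda>_. 1" and M = lborel and A = "{t..<1}"
        and C = "{c..}" and a = "B - l" and b = "l / (1 - c)"] assms
    by (simp add: mean_preserving_step_def set_integral_const)
qed

lemma mean_preserving_step_in_QClass:
  assumes "0 \<le> l" "c < 1"
  shows "mean_preserving_step B c l \<in> QClass"
  unfolding QClass_def
proof (intro CollectI conjI ballI)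
  have "0 \<le> l / (1 - c)" using assms by simp
  then show "mono_on {0..<1} (mean_preserving_step B c l)"
    by (intro mono_onI) (auto simp: mean_preserving_step_def indicator_def)
next
  fix t :: real
  have "\<forall>\<^sub>F s in at_right t. mean_preserving_step B c l s = mean_preserving_step B c l t"
  proof (cases "t < c")
    case True
    then show ?thesis
      by (intro eventually_at_rightI[OF _ True]) (auto simp: mean_preserving_step_def)
  next
    case False
    show ?thesis
      using eventually_at_right_less[of t]
      by (rule eventually_mono) (use False in \<open>auto simp: mean_preserving_step_def\<close>)
  qed
  then show "continuous (at_right t) (mean_preserving_step B c l)"
    unfolding continuous_within by (rule tendsto_eventually)
next
  have "\<bar>mean_preserving_step B c l s\<bar> \<le> \<bar>B - l\<bar> + \<bar>l / (1 - c)\<bar>" for s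
    by (cases "c \<le> s") (simp_all add: mean_preserving_step_def abs_triangle_ineq del: abs_divide)
  then have "\<bar>(mean_preserving_step B c l s)\<^sup>2\<bar> \<le> (\<bar>B - l\<bar> + \<bar>l / (1 - c)\<bar>)\<^sup>2" for s
    by (metis abs_ge_zero abs_power2 power2_abs power_mono)
  moreover have "mean_preserving_step B c l \<in> borel_measurable lborel"
    unfolding mean_preserving_step_def by measurable
  ultimately show "set_integrable lborel {0..<1} (\<lambda>s. (mean_preserving_step B c l s)\<^sup>2)"
    by (intro set_integrable_bounded) auto
qed

lemma icx_ge_trans: "icx_ge Q1 Q2 \<Longrightarrow> icx_ge Q2 Q3 \<Longrightarrow> icx_ge Q1 Q3"
  unfolding icx_ge_def by (meson order_trans)

text \<open>The nonnegativity of \<open>B\<close> covers tails of \<open>Q\<close> that are not integrable, whose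
  Bochner integral is \<open>0\<close>.\<close>
lemma icx_ge_const_if_le:
  assumes B: "0 \<le> B" and le: "\<And>s. s \<in> {0..<1} \<Longrightarrow> Q s \<le> B"
  shows "icx_ge (\<lambda>_. B) Q"
  unfolding icx_ge_def
proof
  fix t :: real assume t: "t \<in> {0..1}"
  have B_int: "(LINT s:{t..<1}|lborel. B) = B * (1 - t)"
    using t by (simp add: set_integral_const)
  show "(LINT s:{t..<1}|lborel. Q s) \<le> (LINT s:{t..<1}|lborel. B)"
  proof (cases "set_integrable lborel {t..<1} Q")
    case True
    have "set_integrable lborel {t..<1} (\<lambda>_. B)"
      using t by (intro set_integrable_bounded[where B = "\<bar>B\<bar>"]) auto
    with True show ?thesis
      using t le by (intro set_integral_mono) auto
  next
    case False
    then have "(LINT s:{t..<1}|lborel. Q s) = 0"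
      unfolding set_lebesgue_integral_def set_integrable_def by (rule not_integrable_integral_eq)
    with B t show ?thesis by (simp add: B_int)
  qed
qed

lemma icx_ge_mean_preserving_step:
  assumes "0 \<le> l" "0 \<le> c" "c < 1"
  shows "icx_ge (mean_preserving_step B c l) (\<lambda>_. B)"
  unfolding icx_ge_def
proof
  fix t :: real assume t: "t \<in> {0..1}"
  have "(1 - c) * (1 - t) \<le> 1 - max t c"
    using t assms
    by (cases "t \<le> c") (auto simp: algebra_simps intro: mult_left_le_one_le mult_right_le_one_le)
  then have "l / (1 - c) * ((1 - c) * (1 - t)) \<le> l / (1 - c) * (1 - max t c)"
    using assms by (intro mult_left_mono) auto
  then have "l * (1 - t) \<le> l / (1 - c) * (1 - max t c)"
    using assms by simp
  then show "(LINT s:{t..<1}|lborel. B) \<le> (LINT s:{t..<1}|lborel. mean_preserving_step B c l s)"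
    using t assms by (simp add: set_integral_mean_preserving_step set_integral_const algebra_simps)
qed

theorem theorem4p1:
  fixes M :: "'a measure" and \<rho> X0 :: "'a \<Rightarrow> real"
  assumes "prob_space M"
    and "complete_measure M"
    and "nonatomic M"
    and "\<rho> \<in> borel_measurable M"
    and "integrable M (\<lambda>x. (\<rho> x)\<^sup>2)"
    and "AE x in M. \<rho> x > 0"
    and "prob_space.variance M \<rho> > 0"
    and "X0 \<in> borel_measurable M"
    and "\<exists>C. AE x in M. \<bar>X0 x\<bar> \<le> C"
  shows "(INF Q\<in>{Q\<in>QClass. icx_ge Q (quantile M X0)}.
            ereal (LINT s:{0<..<1}|lborel. Q s * quantile M \<rho> (1 - s))) = -\<infinity>"
proof -
  interpret prob_space M by fact
  note \<rho> = assms(4,5) and X0 = assms(8)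
  obtain C where "AE x in M. \<bar>X0 x\<bar> \<le> C" using assms(9) by blast
  then have B: "AE x in M. \<bar>X0 x\<bar> \<le> \<bar>C\<bar>" by (auto elim: AE_mp)
  obtain t1 t2 where t: "0 < t1" "t1 < t2" "t2 < 1" "quantile M \<rho> t1 < quantile M \<rho> t2"
    using quantile_nonconstant_if_variance_pos[OF \<rho>(1) assms(7)] by blast
  define g where "g s = quantile M \<rho> (1 - s)" for s
  define c where "c = 1 - t1"
  define G where "G = (LINT s:{0<..<1}|lborel. g s)"
  define d where "d = (LINT s:{c..<1}|lborel. g s) / (1 - c) - G"
  have g: "set_integrable lborel {0<..<1} g"
    unfolding g_def using assms(6) by (intro set_integrable_reflected_quantile \<rho>) (auto elim: AE_mp)
  have "antimono_on {0<..<1} g"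
    unfolding g_def by (rule antimono_on_reflected_quantile[OF \<rho>(1)])
  from tail_average_less_mean_if_antimono[OF g this, of "1 - t2" c] t
  have "d < 0" unfolding d_def G_def c_def g_def by simp
  show ?thesis
  proof (rule INF_ereal_eq_minf_if_affine_ray[where Q = "mean_preserving_step \<bar>C\<bar> c"])
    fix l :: real assume l: "0 \<le> l"
    have "icx_ge (\<lambda>_. \<bar>C\<bar>) (quantile M X0)"
      by (intro icx_ge_const_if_le quantile_le_if_AE_abs_le[OF X0 B]) auto
    then show "mean_preserving_step \<bar>C\<bar> c l \<in> {Q \<in> QClass. icx_ge Q (quantile M X0)}"
      using l t by (auto simp: c_def intro: mean_preserving_step_in_QClass
          icx_ge_trans[OF icx_ge_mean_preserving_step])
    have "{0<..<1} \<inter> {c..} = {c..<1}" using t by (auto simp: c_def)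
    then show "(LINT s:{0<..<1}|lborel. mean_preserving_step \<bar>C\<bar> c l s * quantile M \<rho> (1 - s))
        = \<bar>C\<bar> * G + l * d"
      using set_integral_affine_indicator_mult[OF g, of "{c..}" "\<bar>C\<bar> - l" "l / (1 - c)"]
      by (simp add: mean_preserving_step_def g_def G_def d_def algebra_simps)
  qed (fact \<open>d < 0\<close>)
qed

end
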